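(* A family of structures $\mathfrak{K}=\{\mathcal{A}_i:i\in\mathbb{N}\}$ is $\mathbf{Fin}$-learnable if and only if $\mathfrak{K}$ is a $\Sigma^{\mathrm{inf}}_1$-strong antichain, i.e., there are $\Sigma^{\mathrm{inf}}_1$ sentences $\{\varphi_i:i\in\mathbb{N}\}$ such that for all $i,j$: $\mathcal{A}_i\models\varphi_j \iff i=j$.
   Context: All structures are countable, have domain $\mathbb{N}$, are in a finite relational signature, and are identified with their atomic diagrams (elements of $2^{\mathbb{N}}$ via a fixed Gödel numbering). A family of structures $\mathfrak{K}$ is a countable set of pairwise nonisomorphic such structures. For a structure $\mathcal{S}$ and $s\in\mathbb{N}$, $\mathcal{S}\restriction_s$ denotes the finite substructure with domain $\{0,\dots,s\}$. The learning domain $\mathrm{LD}(\mathfrak{K})$ is the set of all structures with domain $\mathbb{N}$ isomorphic to some member of $\mathfrak{K}$. The hypothesis space is $\{\ulcorner\mathcal{A}\urcorner:\mathcal{A}\in\mathfrak{K}\}\cup\{?\}$, where the $\ulcorner\mathcal{A}\urcorner$ are pairwise distinct formal symbols. A learner is an arbitrary (not necessarily computable) function $\mathbf{M}$ from the finite structures $\{\mathcal{S}\restriction_s:\mathcal{S}\in\mathrm{LD}(\mathfrak{K}),s\in\mathbb{N}\}$ to the hypothesis space. $\mathfrak{K}$ is $\mathbf{Fin}$-learnable (learnable with no mind changes) if there is a learner $\mathbf{M}$ such that for every $\mathcal{S}\in\mathrm{LD}(\mathfrak{K})$ there is $s_0$ with $\mathbf{M}(\mathcal{S}\restriction_t)=?$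 for all $t<s_0$ and $\mathbf{M}(\mathcal{S}\restriction_t)=\ulcorner\mathcal{A}\urcorner$ for all $t\geq s_0$, where $\mathcal{A}\in\mathfrak{K}$ is isomorphic to $\mathcal{S}$. Infinitary logic $\mathcal{L}_{\omega_1\omega}$: $\Sigma^{\mathrm{inf}}_0=\Pi^{\mathrm{inf}}_0$ formulas are finitary quantifier-free formulas; a $\Sigma^{\mathrm{inf}}_\alpha$ formula is a countable disjunction $\bigvee_{i\in I}\exists\bar y_i\,\psi_i(\bar x,\bar y_i)$ with each $\psi_i$ a $\Pi^{\mathrm{inf}}_{\beta_i}$ formula, $\beta_i<\alpha$; a $\Pi^{\mathrm{inf}}_\alpha$ formula is a countable conjunction $\bigwedge_{i\in I}\forall\bar y_i\,\psi_i(\bar x,\bar y_i)$ with each $\psi_i$ a $\Sigma^{\mathrm{inf}}_{\beta_i}$ formula, $\beta_i<\alpha$ (all free variables among a fixed finite tuple $\bar x$). *)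

theory Defs
  imports "HOL-Library.Countable_Set"
begin

text \<open>Finite relational signature: list of arities (relation symbol k has arity sig!k).
A structure with domain nat is given by its relations: S k xs means R_k(xs) holds.
Well-formed structures are false outside the signature, so a structure is identified
with its atomic diagram.\<close>

type_synonym struc = "nat \<Rightarrow> nat list \<Rightarrow> bool"

definition wf_struc :: "nat list \<Rightarrow> struc \<Rightarrow> bool" where
  "wf_struc sig S \<longleftrightarrow> (\<forall>k xs. S k xs \<longrightarrow> k < length sig \<and> length xs = sig ! k)"

definition iso :: "nat list \<Rightarrow> struc \<Rightarrow> struc \<Rightarrow> bool" where
  "iso sig S T \<longleftrightarrow> (\<exists>f. bij f \<and>
     (\<forall>k < length sig. \<forall>xs. length xs = sig ! k \<longrightarrow> (S k xs \<longleftrightarrow> T k (map f xs))))"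

definition restr :: "nat \<Rightarrow> struc \<Rightarrow> nat \<times> struc" where
  "restr s S = (s, (\<lambda>k xs. S k xs \<and> (\<forall>x\<in>set xs. x \<le> s)))"

text \<open>Hypotheses: None = ?, Some i = the symbol for A_i.\<close>
definition Fin_learnable :: "nat list \<Rightarrow> (nat \<Rightarrow> struc) \<Rightarrow> bool" where
  "Fin_learnable sig A \<longleftrightarrow> (\<exists>M :: nat \<times> struc \<Rightarrow> nat option.
     \<forall>S. wf_struc sig S \<and> (\<exists>i. iso sig S (A i)) \<longrightarrow>
       (\<exists>i s0. iso sig S (A i) \<and> (\<forall>t<s0. M (restr t S) = None) \<and>
               (\<forall>t\<ge>s0. M (restr t S) = Some i)))"

datatype qf = Atom nat "nat list" | Eq nat nat | TT | Neg qf | Conj qf qf | Disj qf qf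

fun wf_qf :: "nat list \<Rightarrow> nat \<Rightarrow> qf \<Rightarrow> bool" where
  "wf_qf sig n (Atom k vs) \<longleftrightarrow> k < length sig \<and> length vs = sig ! k \<and> (\<forall>v\<in>set vs. v < n)"
| "wf_qf sig n (Eq a b) \<longleftrightarrow> a < n \<and> b < n"
| "wf_qf sig n TT \<longleftrightarrow> True"
| "wf_qf sig n (Neg p) \<longleftrightarrow> wf_qf sig n p"
| "wf_qf sig n (Conj p q) \<longleftrightarrow> wf_qf sig n p \<and> wf_qf sig n q"
| "wf_qf sig n (Disj p q) \<longleftrightarrow> wf_qf sig n p \<and> wf_qf sig n q"

fun eval_qf :: "struc \<Rightarrow> (nat \<Rightarrow> nat) \<Rightarrow> qf \<Rightarrow> bool" where
  "eval_qf S v (Atom k vs) \<longleftrightarrow> S k (map v vs)"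
| "eval_qf S v (Eq a b) \<longleftrightarrow> v a = v b"
| "eval_qf S v TT \<longleftrightarrow> True"
| "eval_qf S v (Neg p) \<longleftrightarrow> \<not> eval_qf S v p"
| "eval_qf S v (Conj p q) \<longleftrightarrow> eval_qf S v p \<and> eval_qf S v q"
| "eval_qf S v (Disj p q) \<longleftrightarrow> eval_qf S v p \<or> eval_qf S v q"

text \<open>A Sigma^inf_1 sentence: a countable disjunction of formulas \<exists>y_0..y_{n-1}. psi,
psi quantifier-free with free variables among y_0..y_{n-1}; represented by the
countable set of pairs (n, psi).\<close>
definition sigma1_sentence :: "nat list \<Rightarrow> (nat \<times> qf) set \<Rightarrow> bool" where
  "sigma1_sentence sig \<Phi> \<longleftrightarrow> countable \<Phi> \<and> (\<forall>(n, \<psi>)\<in>\<Phi>. wf_qf sig n \<psi>)"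

definition models_sigma1 :: "struc \<Rightarrow> (nat \<times> qf) set \<Rightarrow> bool" where
  "models_sigma1 S \<Phi> \<longleftrightarrow> (\<exists>(n, \<psi>)\<in>\<Phi>. \<exists>v. eval_qf S v \<psi>)"

definition sigma1_strong_antichain :: "nat list \<Rightarrow> (nat \<Rightarrow> struc) \<Rightarrow> bool" where
  "sigma1_strong_antichain sig A \<longleftrightarrow> (\<exists>\<phi> :: nat \<Rightarrow> (nat \<times> qf) set.
     (\<forall>j. sigma1_sentence sig (\<phi> j)) \<and> (\<forall>i j. models_sigma1 (A i) (\<phi> j) \<longleftrightarrow> i = j))"

end

theory Submission
  imports Defs
begin

text \<open>
  If a learner \<open>M\<close> identifies the family with no mind changes, let \<open>\<phi>\<^sub>i\<close> be the disjunction
  of the atomic diagrams of all finite pieces \<open>S\<restriction>\<^sub>t\<close> on which \<open>M\<close> outputs \<open>i\<close>. Every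
  \<open>\<A>\<^sub>i\<close> satisfies \<open>\<phi>\<^sub>i\<close>, since \<open>M\<close> eventually outputs \<open>i\<close> on \<open>\<A>\<^sub>i\<close> itself. If \<open>\<A>\<^sub>j\<close> satisfies a
  disjunct of \<open>\<phi>\<^sub>i\<close>, then some copy of \<open>\<A>\<^sub>j\<close> begins with that piece; \<open>M\<close> commits to \<open>i\<close> on it and
  never changes its mind, so \<open>\<A>\<^sub>j \<cong> \<A>\<^sub>i\<close> and \<open>i = j\<close>.

  Conversely, given the sentences \<open>\<phi>\<^sub>i\<close>, the learner outputs \<open>?\<close> until some disjunct of some
  \<open>\<phi>\<^sub>i\<close> has a witness inside \<open>{0..t}\<close>, and \<open>i\<close> from then on. Witnesses persist as \<open>t\<close> grows,
  and only the correct \<open>i\<close> can ever be witnessed.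
\<close>

instance qf :: countable by countable_datatype

lemma iso_refl: "iso sig S S"
  unfolding iso_def by (intro exI[of _ id]) auto

lemma iso_sym:
  assumes "iso sig S T"
  shows "iso sig T S"
proof -
  obtain f where f: "bij f" "\<forall>k < length sig. \<forall>xs. length xs = sig ! k \<longrightarrow> (S k xs \<longleftrightarrow> T k (map f xs))"
    using assms unfolding iso_def by blast
  have "T k ys \<longleftrightarrow> S k (map (inv f) ys)" if "k < length sig" "length ys = sig ! k" for k ys
  proof -
    have "map f (map (inv f) ys) = ys"
      using f(1) by (simp add: bij_is_surj surj_f_inv_f map_idI)
    then show ?thesis using f(2) that by (metis length_map)
  qed
  then show ?thesis
    unfolding iso_def using bij_imp_bij_inv[OF f(1)] by blast
qed

lemma iso_trans:
  assumes "iso sig S T" "iso sig T U"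
  shows "iso sig S U"
proof -
  obtain f where f: "bij f" "\<forall>k < length sig. \<forall>xs. length xs = sig ! k \<longrightarrow> (S k xs \<longleftrightarrow> T k (map f xs))"
    using assms(1) unfolding iso_def by blast
  obtain g where g: "bij g" "\<forall>k < length sig. \<forall>xs. length xs = sig ! k \<longrightarrow> (T k xs \<longleftrightarrow> U k (map g xs))"
    using assms(2) unfolding iso_def by blast
  show ?thesis
    unfolding iso_def using f g by (intro exI[of _ "g \<circ> f"]) (simp add: bij_comp)
qed

lemma wf_struc_relabel:
  assumes "wf_struc sig T"
  shows "wf_struc sig (\<lambda>k xs. T k (map g xs))"
  using assms unfolding wf_struc_def by (metis length_map)

lemma iso_relabel:
  assumes "bij g"
  shows "iso sig (\<lambda>k xs. T k (map g xs)) T"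
  unfolding iso_def using assms by blast

lemma bij_extend_inj_on_atMost:
  fixes v :: "nat \<Rightarrow> nat"
  assumes "inj_on v {..t}"
  obtains g where "bij g" "\<And>x. x \<le> t \<Longrightarrow> g x = v x"
proof -
  let ?B = "v ` {..t}"
  have "bij_betw (enumerate (- {..t})) UNIV (- {..t})" "bij_betw (enumerate (- ?B)) UNIV (- ?B)"
    by (simp_all add: bij_enumerate Compl_eq_Diff_UNIV Diff_infinite_finite)
  then have "bij_betw (enumerate (- ?B) \<circ> inv_into UNIV (enumerate (- {..t}))) (- {..t}) (- ?B)"
    by (blast intro: bij_betw_trans bij_betw_inv_into)
  from bij_betw_disjoint_Un[OF inj_on_imp_bij_betw[OF assms] this]
  have "bij (\<lambda>x. if x \<in> {..t} then v x else (enumerate (- ?B) \<circ> inv_into UNIV (enumerate (- {..t}))) x)"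
    by (simp only: Compl_partition Compl_disjoint simp_thms)
  then show thesis by (rule that) simp
qed

lemma eval_qf_iso:
  assumes "bij f" "\<forall>k < length sig. \<forall>xs. length xs = sig ! k \<longrightarrow> (S k xs \<longleftrightarrow> T k (map f xs))"
    and "wf_qf sig n \<psi>"
  shows "eval_qf S v \<psi> = eval_qf T (f \<circ> v) \<psi>"
  using assms(3)
proof (induction \<psi>)
  case (Eq a b)
  then show ?case using bij_is_inj[OF assms(1)] by (auto simp: inj_eq)
qed (use assms in auto)

lemma models_sigma1_iso:
  assumes "iso sig S T" "sigma1_sentence sig \<Phi>"
  shows "models_sigma1 S \<Phi> \<longleftrightarrow> models_sigma1 T \<Phi>"
proof -
  have "models_sigma1 T \<Phi>" if ST: "iso sig S T" and S: "models_sigma1 S \<Phi>" for S T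
  proof -
    obtain f where f: "bij f" "\<forall>k < length sig. \<forall>xs. length xs = sig ! k \<longrightarrow> (S k xs \<longleftrightarrow> T k (map f xs))"
      using ST unfolding iso_def by blast
    obtain n \<psi> v where \<psi>: "(n, \<psi>) \<in> \<Phi>" "eval_qf S v \<psi>"
      using S unfolding models_sigma1_def by blast
    have "wf_qf sig n \<psi>" using \<psi>(1) assms(2) unfolding sigma1_sentence_def by blast
    then have "eval_qf T (f \<circ> v) \<psi>" using eval_qf_iso[OF f] \<psi>(2) by blast
    then show ?thesis using \<psi>(1) unfolding models_sigma1_def by blast
  qed
  then show ?thesis using assms(1) iso_sym by blast
qed

lemma eval_qf_restr:
  assumes "wf_qf sig n \<psi>" "\<forall>y<n. v y \<le> t"
  shows "eval_qf (snd (restr t S)) v \<psi> = eval_qf S v \<psi>"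
  using assms by (induction \<psi>) (auto simp: restr_def)

lemma restr_eqI:
  assumes "\<And>k xs. \<forall>x\<in>set xs. x \<le> t \<Longrightarrow> S k xs = T k xs"
  shows "restr t S = restr t T"
  using assms unfolding restr_def by fastforce

definition Conjs :: "qf list \<Rightarrow> qf" where
  "Conjs ps = foldr Conj ps TT"

lemma eval_Conjs: "eval_qf S v (Conjs ps) \<longleftrightarrow> (\<forall>p\<in>set ps. eval_qf S v p)"
  unfolding Conjs_def by (induction ps) auto

lemma wf_qf_Conjs: "wf_qf sig n (Conjs ps) \<longleftrightarrow> (\<forall>p\<in>set ps. wf_qf sig n p)"
  unfolding Conjs_def by (induction ps) auto

definition diagram_literal :: "struc \<Rightarrow> nat \<Rightarrow> nat list \<Rightarrow> qf" where
  "diagram_literal S k xs = (if S k xs then Atom k xs else Neg (Atom k xs))"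

lemma eval_diagram_literal:
  "eval_qf T v (diagram_literal S k xs) \<longleftrightarrow> (T k (map v xs) \<longleftrightarrow> S k xs)"
  by (simp add: diagram_literal_def)

lemma wf_qf_diagram_literal:
  "wf_qf sig n (diagram_literal S k xs) \<longleftrightarrow> k < length sig \<and> length xs = sig ! k \<and> (\<forall>x\<in>set xs. x < n)"
  by (simp add: diagram_literal_def)

text \<open>Variable \<open>a\<close> stands for the element \<open>a\<close>.\<close>
definition atomic_diagram :: "nat list \<Rightarrow> nat \<Rightarrow> struc \<Rightarrow> qf" where
  "atomic_diagram sig n S = Conjs
     ([Neg (Eq a b). a \<leftarrow> [0..<n], b \<leftarrow> [0..<n], a \<noteq> b] @
      [diagram_literal S k xs. k \<leftarrow> [0..<length sig], xs \<leftarrow> List.n_lists (sig ! k) [0..<n]])"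

lemma wf_qf_atomic_diagram: "wf_qf sig n (atomic_diagram sig n S)"
  unfolding atomic_diagram_def wf_qf_Conjs
  by (auto simp: wf_qf_diagram_literal set_n_lists subset_iff)

lemma eval_atomic_diagram_iff:
  "eval_qf T v (atomic_diagram sig n S) \<longleftrightarrow> inj_on v {..<n} \<and>
     (\<forall>k < length sig. \<forall>xs. length xs = sig ! k \<and> set xs \<subseteq> {..<n} \<longrightarrow> (T k (map v xs) \<longleftrightarrow> S k xs))"
  unfolding atomic_diagram_def eval_Conjs set_append ball_Un
  by (simp add: ball_UN Ball_image_comp eval_diagram_literal set_n_lists atLeast0LessThan inj_on_def)
    blast

lemma eval_atomic_diagram_self: "eval_qf S id (atomic_diagram sig n S)"
  by (simp add: eval_atomic_diagram_iff)

lemma atomic_diagram_realised_by_copy: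
  assumes "wf_struc sig S" "wf_struc sig T"
    and "eval_qf T v (atomic_diagram sig (Suc t) S)"
  obtains S' where "wf_struc sig S'" "iso sig S' T" "restr t S' = restr t S"
proof -
  have diag: "inj_on v {..t}"
    "\<And>k xs. k < length sig \<Longrightarrow> length xs = sig ! k \<Longrightarrow> \<forall>x\<in>set xs. x \<le> t \<Longrightarrow> T k (map v xs) \<longleftrightarrow> S k xs"
    using assms(3) unfolding eval_atomic_diagram_iff lessThan_Suc_atMost by auto
  obtain g where g: "bij g" "\<And>x. x \<le> t \<Longrightarrow> g x = v x"
    using bij_extend_inj_on_atMost[OF diag(1)] by blast
  let ?S' = "\<lambda>k xs. T k (map g xs)"
  have "restr t ?S' = restr t S"
  proof (rule restr_eqI)
    fix k xs assume xs: "\<forall>x\<in>set xs. x \<le> t"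
    then have "map g xs = map v xs" using g(2) by simp
    then show "?S' k xs = S k xs"
      using diag(2)[OF _ _ xs] assms(1,2) unfolding wf_struc_def by (metis length_map)
  qed
  then show thesis
    by (rule that[OF wf_struc_relabel[OF assms(2)] iso_relabel[OF g(1)]])
qed

definition Fin_learner :: "nat list \<Rightarrow> (nat \<Rightarrow> struc) \<Rightarrow> (nat \<times> struc \<Rightarrow> nat option) \<Rightarrow> bool" where
  "Fin_learner sig A M \<longleftrightarrow> (\<forall>S. wf_struc sig S \<and> (\<exists>i. iso sig S (A i)) \<longrightarrow>
     (\<exists>i s0. iso sig S (A i) \<and> (\<forall>t<s0. M (restr t S) = None) \<and> (\<forall>t\<ge>s0. M (restr t S) = Some i)))"

lemma Fin_learnable_iff_Fin_learner: "Fin_learnable sig A \<longleftrightarrow> (\<exists>M. Fin_learner sig A M)"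
  unfolding Fin_learnable_def Fin_learner_def ..

lemma Fin_learner_commits:
  assumes "Fin_learner sig A M" "wf_struc sig S" "iso sig S (A j)"
    and "M (restr t S) = Some i"
  shows "iso sig S (A i)"
proof -
  obtain i' s0 where L: "iso sig S (A i')" "\<forall>t<s0. M (restr t S) = None" "\<forall>t\<ge>s0. M (restr t S) = Some i'"
    using assms(1-3) unfolding Fin_learner_def by blast
  then have "i = i'" using assms(4) by (metis not_le option.distinct(1) option.inject)
  then show ?thesis using L(1) by simp
qed

lemma Fin_learner_outputs:
  assumes "Fin_learner sig A M" "wf_struc sig (A i)"
    and "\<forall>i j. i \<noteq> j \<longrightarrow> \<not> iso sig (A i) (A j)"
  shows "\<exists>t. M (restr t (A i)) = Some i"
proof -
  obtain i' s0 where L: "iso sig (A i) (A i')" "\<forall>t<s0. M (restr t (A i)) = None"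
      "\<forall>t\<ge>s0. M (restr t (A i)) = Some i'"
    using assms(1,2) iso_refl unfolding Fin_learner_def by blast
  then have "i' = i" using assms(3) by metis
  then show ?thesis using L(3) by blast
qed

definition learner_diagrams :: "nat list \<Rightarrow> (nat \<times> struc \<Rightarrow> nat option) \<Rightarrow> nat \<Rightarrow> (nat \<times> qf) set" where
  "learner_diagrams sig M i =
     {(Suc t, atomic_diagram sig (Suc t) S) | t S. wf_struc sig S \<and> M (restr t S) = Some i}"

lemma sigma1_sentence_learner_diagrams: "sigma1_sentence sig (learner_diagrams sig M i)"
  unfolding sigma1_sentence_def learner_diagrams_def
  using wf_qf_atomic_diagram by (auto intro: countableI_type)

lemma models_learner_diagrams:
  assumes M: "Fin_learner sig A M"
    and wf: "\<forall>i. wf_struc sig (A i)"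
    and noniso: "\<forall>i j. i \<noteq> j \<longrightarrow> \<not> iso sig (A i) (A j)"
  shows "models_sigma1 (A i) (learner_diagrams sig M j) \<longleftrightarrow> i = j"
proof
  assume "models_sigma1 (A i) (learner_diagrams sig M j)"
  then obtain n \<psi> v where "(n, \<psi>) \<in> learner_diagrams sig M j" "eval_qf (A i) v \<psi>"
    unfolding models_sigma1_def by blast
  then obtain t S where S: "wf_struc sig S" "M (restr t S) = Some j"
    and v: "eval_qf (A i) v (atomic_diagram sig (Suc t) S)"
    unfolding learner_diagrams_def by blast
  obtain S' where S': "wf_struc sig S'" "iso sig S' (A i)" "restr t S' = restr t S"
    using atomic_diagram_realised_by_copy[OF S(1) wf[rule_format] v] by blast
  have "M (restr t S') = Some j" using S(2) S'(3) by simp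
  then have "iso sig S' (A j)" using Fin_learner_commits[OF M S'(1,2)] by blast
  then show "i = j" using noniso iso_trans[OF iso_sym[OF S'(2)]] by blast
next
  assume "i = j"
  obtain t where "M (restr t (A i)) = Some j"
    using Fin_learner_outputs[OF M wf[rule_format] noniso] \<open>i = j\<close> by blast
  then have "(Suc t, atomic_diagram sig (Suc t) (A i)) \<in> learner_diagrams sig M j"
    unfolding learner_diagrams_def using wf by (intro CollectI exI[of _ t] exI[of _ "A i"]) simp
  then show "models_sigma1 (A i) (learner_diagrams sig M j)"
    unfolding models_sigma1_def using eval_atomic_diagram_self by blast
qed

definition sigma1_witnessed :: "nat \<Rightarrow> struc \<Rightarrow> (nat \<times> qf) set \<Rightarrow> bool" where
  "sigma1_witnessed t S \<Phi> \<longleftrightarrow> (\<exists>(n, \<psi>)\<in>\<Phi>. \<exists>v. (\<forall>y<n. v y \<le> t) \<and> eval_qf S v \<psi>)"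

lemma sigma1_witnessed_restr:
  assumes "sigma1_sentence sig \<Phi>"
  shows "sigma1_witnessed t (snd (restr t S)) \<Phi> \<longleftrightarrow> sigma1_witnessed t S \<Phi>"
  unfolding sigma1_witnessed_def
proof (rule bex_cong[OF refl], clarify)
  fix n \<psi> assume "(n, \<psi>) \<in> \<Phi>"
  then have "wf_qf sig n \<psi>" using assms unfolding sigma1_sentence_def by blast
  then show "(\<exists>v. (\<forall>y<n. v y \<le> t) \<and> eval_qf (snd (restr t S)) v \<psi>) \<longleftrightarrow>
      (\<exists>v. (\<forall>y<n. v y \<le> t) \<and> eval_qf S v \<psi>)"
    using eval_qf_restr by blast
qed

lemma sigma1_witnessed_mono:
  assumes "sigma1_witnessed t S \<Phi>" "t \<le> t'"
  shows "sigma1_witnessed t' S \<Phi>"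
proof -
  obtain n \<psi> v where "(n, \<psi>) \<in> \<Phi>" "\<forall>y<n. v y \<le> t" "eval_qf S v \<psi>"
    using assms(1) unfolding sigma1_witnessed_def by blast
  then show ?thesis
    using assms(2) unfolding sigma1_witnessed_def by (intro bexI[of _ "(n, \<psi>)"]) (auto intro: le_trans)
qed

lemma sigma1_witnessed_imp_models: "sigma1_witnessed t S \<Phi> \<Longrightarrow> models_sigma1 S \<Phi>"
  unfolding sigma1_witnessed_def models_sigma1_def by blast

lemma models_imp_sigma1_witnessed:
  assumes "models_sigma1 S \<Phi>"
  shows "\<exists>t. sigma1_witnessed t S \<Phi>"
proof -
  obtain n \<psi> v where "(n, \<psi>) \<in> \<Phi>" "eval_qf S v \<psi>"
    using assms unfolding models_sigma1_def by blast
  then have "sigma1_witnessed (\<Sum>y<n. v y) S \<Phi>"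
    unfolding sigma1_witnessed_def by (auto intro!: exI[of _ v] member_le_sum)
  then show ?thesis ..
qed

definition sigma1_learner :: "(nat \<Rightarrow> (nat \<times> qf) set) \<Rightarrow> nat \<times> struc \<Rightarrow> nat option" where
  "sigma1_learner \<phi> p = (if \<exists>i. sigma1_witnessed (fst p) (snd p) (\<phi> i)
     then Some (SOME i. sigma1_witnessed (fst p) (snd p) (\<phi> i)) else None)"

lemma sigma1_learner_restr:
  assumes "\<And>j. sigma1_sentence sig (\<phi> j)"
  shows "sigma1_learner \<phi> (restr t S) = (if \<exists>i. sigma1_witnessed t S (\<phi> i)
     then Some (SOME i. sigma1_witnessed t S (\<phi> i)) else None)"
proof -
  have fst_restr: "fst (restr t S) = t" by (simp add: restr_def)
  show ?thesis unfolding sigma1_learner_def fst_restr sigma1_witnessed_restr[OF assms] ..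
qed

lemma Fin_learner_sigma1_learner:
  assumes sent: "\<And>j. sigma1_sentence sig (\<phi> j)"
    and antichain: "\<And>i j. models_sigma1 (A i) (\<phi> j) \<longleftrightarrow> i = j"
  shows "Fin_learner sig A (sigma1_learner \<phi>)"
  unfolding Fin_learner_def
proof (intro allI impI)
  fix S assume "wf_struc sig S \<and> (\<exists>i. iso sig S (A i))"
  then obtain i0 where iso0: "iso sig S (A i0)" by blast
  have models: "models_sigma1 S (\<phi> i) \<longleftrightarrow> i = i0" for i
    using models_sigma1_iso[OF iso0 sent, of i] antichain[of i0 i] by auto
  then have correct: "i = i0" if "sigma1_witnessed t S (\<phi> i)" for t i
    using sigma1_witnessed_imp_models[OF that] by blast
  have "\<exists>t. sigma1_witnessed t S (\<phi> i0)"
    using models_imp_sigma1_witnessed models by blast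
  define s0 where "s0 = (LEAST t. sigma1_witnessed t S (\<phi> i0))"
  have s0: "sigma1_witnessed s0 S (\<phi> i0)"
    unfolding s0_def by (rule LeastI_ex) fact
  have "sigma1_learner \<phi> (restr t S) = Some i0" if "s0 \<le> t" for t
  proof -
    have "sigma1_witnessed t S (\<phi> i0)" using sigma1_witnessed_mono[OF s0 that] .
    moreover from someI[where P = "\<lambda>i. sigma1_witnessed t S (\<phi> i)", OF this]
    have "(SOME i. sigma1_witnessed t S (\<phi> i)) = i0"
      by (rule correct)
    ultimately show ?thesis using sigma1_learner_restr[OF sent] by auto
  qed
  moreover have "sigma1_learner \<phi> (restr t S) = None" if "t < s0" for t
    using not_less_Least[OF that[unfolded s0_def]] correct sigma1_learner_restr[OF sent] by auto
  ultimately show "\<exists>i s0. iso sig S (A i) \<and> (\<forall>t<s0. sigma1_learner \<phi> (restr t S) = None) \<and>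
      (\<forall>t\<ge>s0. sigma1_learner \<phi> (restr t S) = Some i)"
    using iso0 by blast
qed

theorem mainTheorem2:
  fixes sig :: "nat list" and A :: "nat \<Rightarrow> struc"
  assumes "\<forall>i. wf_struc sig (A i)"
    and "\<forall>i j. i \<noteq> j \<longrightarrow> \<not> iso sig (A i) (A j)"
  shows "Fin_learnable sig A \<longleftrightarrow> sigma1_strong_antichain sig A"
proof
  assume "Fin_learnable sig A"
  then obtain M where "Fin_learner sig A M"
    unfolding Fin_learnable_iff_Fin_learner ..
  then show "sigma1_strong_antichain sig A"
    unfolding sigma1_strong_antichain_def
    using sigma1_sentence_learner_diagrams models_learner_diagrams[OF _ assms] by blast
next
  assume "sigma1_strong_antichain sig A"
  then show "Fin_learnable sig A"
    unfolding sigma1_strong_antichain_def Fin_learnable_iff_Fin_learner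
    using Fin_learner_sigma1_learner by blast
qed

end
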